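(* Let $A\in\mathbb{R}^{m\times n}$, let $X_0\in\mathbb{R}^{n\times m}$, and define iterates $$X_{k+1} = X_k - A^\top A S_k\,(S_k^\top A^\top A A^\top A S_k)^\dagger S_k^\top A^\top (A X_k - I),\qquad k\ge 0,$$ for arbitrary matrices $S_k\in\mathbb{R}^{m\times\tau}$. If $\mathrm{Range}(X_0)\subset\mathrm{Range}(A^\top A)$, then $\mathrm{Range}(X_k - A^\dagger)\subset\mathrm{Range}(A^\top A)$ for all $k$.
   Context: $M^\dagger$ denotes the Moore–Penrose pseudoinverse and $\mathrm{Range}(M)$ the column space of a real matrix $M$. *)

theory Defs
  imports "HOL-Analysis.Analysis"
begin

definition is_mp_pinv :: "real^'n^'m \<Rightarrow> real^'m^'n \<Rightarrow> bool" where
  "is_mp_pinv M P \<longleftrightarrow>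
     M ** P ** M = M \<and> P ** M ** P = P \<and>
     transpose (M ** P) = M ** P \<and> transpose (P ** M) = P ** M"

definition mp_pinv :: "real^'n^'m \<Rightarrow> real^'m^'n" where
  "mp_pinv M = (THE P. is_mp_pinv M P)"

definition col_space :: "real^'n^'m \<Rightarrow> (real^'m) set" where
  "col_space M = range (\<lambda>x. M *v x)"

end

theory Submission
  imports Defs
begin

text \<open>Each update subtracts a matrix of the form \<open>A\<^sup>T A Q\<close>, and the column space of
  \<open>A\<^sup>T A\<close> is a subspace, so by induction everything reduces to
  \<open>Range(X\<^sub>0 - A\<^sup>\<dagger>) \<subseteq> Range(A\<^sup>T A)\<close>, i.e. to \<open>Range(A\<^sup>\<dagger>) \<subseteq> Range(A\<^sup>T)\<close>
  together with \<open>Range(A\<^sup>T) = Range(A\<^sup>T A)\<close>. Since the pseudoinverse is given only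
  by a definite description, its existence and uniqueness are proved along the way:
  it is \<open>A\<^sup>T U\<close> for any \<open>U\<close> solving \<open>A\<^sup>T A A\<^sup>T U = A\<^sup>T\<close>, which is solvable because
  \<open>Range(A\<^sup>T A A\<^sup>T) = Range(A\<^sup>T)\<close>, a consequence of \<open>Range(N N\<^sup>T) = Range(N)\<close>.\<close>

lemma col_space_mult_subset: "col_space (M ** N) \<subseteq> col_space M"
  unfolding col_space_def by (auto simp: matrix_vector_mul_assoc[symmetric])

lemma subspace_col_space: "subspace (col_space M)"
  unfolding col_space_def
  by (rule linear_subspace_image[OF matrix_vector_mul_linear subspace_UNIV])

lemma col_space_diff_subset:
  assumes "col_space M \<subseteq> col_space B" and "col_space N \<subseteq> col_space B"
  shows "col_space (M - N) \<subseteq> col_space B"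
proof
  fix y assume "y \<in> col_space (M - N)"
  then obtain x where "y = M *v x - N *v x"
    unfolding col_space_def by (auto simp: matrix_vector_mult_diff_rdistrib)
  moreover have "M *v x \<in> col_space B" "N *v x \<in> col_space B"
    using assms unfolding col_space_def by auto
  ultimately show "y \<in> col_space B"
    using subspace_col_space subspace_diff by blast
qed

lemma col_space_subset_iff_factor:
  fixes M :: "real^'k^'m" and B :: "real^'n^'m"
  shows "col_space M \<subseteq> col_space B \<longleftrightarrow> (\<exists>U. B ** U = M)"
proof
  assume sub: "col_space M \<subseteq> col_space B"
  have "\<exists>u. B *v u = column j M" for j
  proof -
    have "column j M = M *v axis j 1"
      by (simp add: column_def matrix_vector_mult_def axis_def vec_eq_iff if_distrib cong: if_cong)
    then have "column j M \<in> col_space B"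
      using sub unfolding col_space_def by auto
    then show ?thesis unfolding col_space_def by auto
  qed
  then obtain u where u: "\<And>j. B *v u j = column j M" by metis
  have "(B ** (\<chi> i j. u j $ i)) $ i $ j = M $ i $ j" for i j
  proof -
    have "(B ** (\<chi> i j. u j $ i)) $ i $ j = (B *v u j) $ i"
      by (simp add: matrix_matrix_mult_def matrix_vector_mult_def)
    then show ?thesis by (simp add: u column_def)
  qed
  then show "\<exists>U. B ** U = M" by (auto simp: vec_eq_iff)
next
  assume "\<exists>U. B ** U = M"
  then show "col_space M \<subseteq> col_space B" using col_space_mult_subset by blast
qed

lemma inner_mult_transpose_self:
  fixes N :: "real^'n^'m"
  shows "q \<bullet> ((N ** transpose N) *v q) = (transpose N *v q) \<bullet> (transpose N *v q)"
  by (simp add: dot_lmul_matrix matrix_vector_mul_assoc[symmetric])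

text \<open>A vector orthogonal to \<open>Range(N N\<^sup>T)\<close> satisfies \<open>|N\<^sup>T q|\<^sup>2 = 0\<close> by the identity
  above, hence is orthogonal to \<open>Range(N)\<close> as well.\<close>

lemma col_space_mult_transpose_self:
  fixes N :: "real^'n^'m"
  shows "col_space (N ** transpose N) = col_space N"
proof
  show "col_space (N ** transpose N) \<subseteq> col_space N" by (rule col_space_mult_subset)
next
  let ?C = "col_space (N ** transpose N)"
  show "col_space N \<subseteq> ?C"
  proof
    fix y assume "y \<in> col_space N"
    then obtain x where y: "y = N *v x" unfolding col_space_def by auto
    have span_C: "span ?C = ?C" using subspace_col_space span_eq_iff by blast
    obtain p q where p: "p \<in> ?C" and q: "\<And>w. w \<in> ?C \<Longrightarrow> orthogonal q w"
      and y_pq: "y = p + q"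
      using orthogonal_subspace_decomp_exists[of ?C y] span_C by metis
    have "(N ** transpose N) *v q \<in> ?C" by (simp add: col_space_def)
    then have "q \<bullet> ((N ** transpose N) *v q) = 0" using q orthogonal_def by blast
    then have "(transpose N *v q) \<bullet> (transpose N *v q) = 0"
      by (simp only: inner_mult_transpose_self)
    then have "q \<bullet> y = 0"
      by (simp add: y dot_lmul_matrix[symmetric])
    moreover have "q \<bullet> p = 0" using q p orthogonal_def by blast
    ultimately have "q = 0" using y_pq by (simp add: inner_add_right)
    then show "y \<in> ?C" using y_pq p by simp
  qed
qed

lemma col_space_mult_transpose_mult:
  fixes M :: "real^'n^'m"
  shows "col_space (M ** transpose M ** M) = col_space M"
proof
  show "col_space (M ** transpose M ** M) \<subseteq> col_space M"
    by (metis col_space_mult_subset matrix_mul_assoc)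
next
  obtain Z where "transpose M ** M ** Z = transpose M"
    using col_space_mult_transpose_self[of "transpose M"] col_space_subset_iff_factor by fastforce
  then have "M ** transpose M = (M ** transpose M ** M) ** Z"
    by (metis matrix_mul_assoc)
  then have "col_space (M ** transpose M) \<subseteq> col_space (M ** transpose M ** M)"
    by (metis col_space_mult_subset)
  then show "col_space M \<subseteq> col_space (M ** transpose M ** M)"
    using col_space_mult_transpose_self[of M] by simp
qed

lemma is_mp_pinv_of_factors:
  fixes A :: "real^'n^'m"
  assumes U: "transpose A ** A ** transpose A ** U = transpose A"
    and V: "V ** transpose A ** A ** transpose A = transpose A"
  shows "is_mp_pinv A (transpose A ** U)"
proof -
  note T = matrix_transpose_mul matrix_mul_assoc
  define P where "P = transpose A ** U"
  have P_V: "P = V ** transpose A"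
    by (metis P_def U V matrix_mul_assoc)
  have U': "transpose U ** A ** transpose A ** A = A"
    using arg_cong[OF U, of transpose] by (simp add: T)
  have V': "A ** transpose A ** A ** transpose V = A"
    using arg_cong[OF V, of transpose] by (simp add: T)
  have AP_sym: "transpose (A ** P) = A ** P"
  proof -
    have "A ** P = transpose U ** A ** transpose A ** A ** transpose A ** U"
      using U' by (simp add: T P_def)
    also have "\<dots> = transpose U ** A ** transpose A"
      using U by (metis matrix_mul_assoc)
    finally show ?thesis by (simp add: T P_def)
  qed
  have PA_sym: "transpose (P ** A) = P ** A"
  proof -
    have "P ** A = V ** transpose A ** A ** transpose A ** A ** transpose V"
      using V' by (metis P_V matrix_mul_assoc)
    also have "\<dots> = transpose A ** A ** transpose V"
      using V by (metis matrix_mul_assoc)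
    finally show ?thesis by (simp add: T P_V)
  qed
  have "A ** P ** A = A"
    using U' AP_sym by (metis P_def matrix_transpose_mul matrix_mul_assoc transpose_transpose)
  moreover have "P ** A ** P = P"
    using U P_V P_def by (metis matrix_mul_assoc)
  ultimately show ?thesis
    using AP_sym PA_sym unfolding is_mp_pinv_def P_def by blast
qed

lemma is_mp_pinv_transpose:
  fixes A :: "real^'n^'m"
  assumes "is_mp_pinv A P"
  shows "is_mp_pinv (transpose A) (transpose P)"
proof -
  note T = matrix_transpose_mul matrix_mul_assoc
  have "transpose A ** transpose P ** transpose A = transpose (A ** P ** A)"
    and "transpose P ** transpose A ** transpose P = transpose (P ** A ** P)"
    and "transpose A ** transpose P = transpose (P ** A)"
    and "transpose P ** transpose A = transpose (A ** P)"
    by (simp_all add: T)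
  then show ?thesis
    using assms unfolding is_mp_pinv_def by simp
qed

lemma is_mp_pinv_eq_mult:
  fixes A :: "real^'n^'m"
  assumes P: "is_mp_pinv A P" and Q: "is_mp_pinv A Q"
  shows "P = P ** A ** Q"
proof -
  note T = matrix_transpose_mul matrix_mul_assoc
  have "transpose A = transpose (A ** Q ** A)"
    using Q unfolding is_mp_pinv_def by simp
  then have A_Q: "transpose A = transpose A ** transpose Q ** transpose A"
    by (simp add: T)
  have "P = P ** transpose (A ** P)"
    using P unfolding is_mp_pinv_def by (simp add: T)
  also have "\<dots> = P ** transpose P ** (transpose A ** transpose Q ** transpose A)"
    using A_Q by (simp add: T)
  also have "\<dots> = P ** transpose (A ** P) ** transpose (A ** Q)"
    by (simp add: T)
  also have "\<dots> = (P ** A ** P) ** A ** Q"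
    using P Q unfolding is_mp_pinv_def by (simp add: T)
  finally show ?thesis
    using P unfolding is_mp_pinv_def by simp
qed

text \<open>The same identity for \<open>A\<^sup>T\<close> gives \<open>Q = P A Q\<close> after transposing.\<close>

lemma is_mp_pinv_unique:
  fixes A :: "real^'n^'m"
  assumes P: "is_mp_pinv A P" and Q: "is_mp_pinv A Q"
  shows "P = Q"
proof -
  have "transpose Q = transpose Q ** transpose A ** transpose P"
    using is_mp_pinv_eq_mult[OF is_mp_pinv_transpose[OF Q] is_mp_pinv_transpose[OF P]] .
  then have "Q = transpose (transpose Q ** transpose A ** transpose P)"
    by simp
  also have "\<dots> = P ** A ** Q"
    by (simp add: matrix_transpose_mul matrix_mul_assoc)
  finally have "Q = P ** A ** Q" .
  then show ?thesis
    using is_mp_pinv_eq_mult[OF P Q] by simp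
qed

lemma is_mp_pinv_exists:
  fixes A :: "real^'n^'m"
  obtains P where "is_mp_pinv A P" and "col_space P \<subseteq> col_space (transpose A)"
proof -
  obtain U where "transpose A ** A ** transpose A ** U = transpose A"
    using col_space_mult_transpose_mult[of "transpose A"] col_space_subset_iff_factor
    by fastforce
  moreover obtain W where W: "A ** transpose A ** A ** W = A"
    using col_space_mult_transpose_mult[of A] col_space_subset_iff_factor by fastforce
  have "transpose W ** transpose A ** A ** transpose A = transpose A"
    using arg_cong[OF W, of transpose] by (simp add: matrix_transpose_mul matrix_mul_assoc)
  ultimately have "is_mp_pinv A (transpose A ** U)" by (rule is_mp_pinv_of_factors)
  then show ?thesis using col_space_mult_subset that by blast
qed

lemma col_space_mp_pinv:
  fixes A :: "real^'n^'m"
  shows "col_space (mp_pinv A) \<subseteq> col_space (transpose A ** A)"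
proof -
  obtain P where P: "is_mp_pinv A P" and "col_space P \<subseteq> col_space (transpose A)"
    by (rule is_mp_pinv_exists)
  moreover have "mp_pinv A = P"
    unfolding mp_pinv_def using P is_mp_pinv_unique by blast
  ultimately show ?thesis
    using col_space_mult_transpose_self[of "transpose A"] by simp
qed

theorem lemma3:
  fixes A :: "real^'n^'m"
    and S :: "nat \<Rightarrow> real^'tau^'n"
    and X :: "nat \<Rightarrow> real^'m^'n"
  assumes iter: "\<And>k. X (Suc k) = X k -
      transpose A ** A ** S k **
      mp_pinv (transpose (S k) ** transpose A ** A ** transpose A ** A ** S k) **
      transpose (S k) ** transpose A ** (A ** X k - mat 1)"
    and init: "col_space (X 0) \<subseteq> col_space (transpose A ** A)"
  shows "\<forall>k. col_space (X k - mp_pinv A) \<subseteq> col_space (transpose A ** A)"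
proof
  fix k
  show "col_space (X k - mp_pinv A) \<subseteq> col_space (transpose A ** A)"
  proof (induction k)
    case 0
    show ?case using init col_space_mp_pinv by (rule col_space_diff_subset)
  next
    case (Suc k)
    define Q where "Q = S k **
      mp_pinv (transpose (S k) ** transpose A ** A ** transpose A ** A ** S k) **
      transpose (S k) ** transpose A ** (A ** X k - mat 1)"
    have step: "X (Suc k) - mp_pinv A = (X k - mp_pinv A) - (transpose A ** A) ** Q"
      by (simp add: iter Q_def matrix_mul_assoc)
    show ?case
      unfolding step by (rule col_space_diff_subset[OF Suc.IH col_space_mult_subset])
  qed
qed

end
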